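(* Let $\Omega\subseteq\mathbb R^d$ be nonempty open, $A\in\mathcal A(\Omega)$, $b,c\in L^\infty(\Omega;\mathbb C^d)$, $V\in L^1_{\rm loc}(\Omega)$ nonnegative, $\mathbf A=(A,b,c,V)$, and let $r>0$, $\zeta\in\mathbb C\setminus\{0\}$, $X\in\mathbb C^d$. Suppose that for a.e. $x\in\Omega$, $\Gamma_r^{\mathbf A}(x,\xi)\ge0$ for all $\xi\in\mathbb C^d$. Then $\mathbf H^{\mathbf A(x)}_{F_r}[\zeta;X]\ge0$ for a.e. $x\in\Omega$. Moreover, if $\mathbf A\in\mathcal S_r(\Omega)$, then for a.e. $x\in\Omega$, $$\mathbf H^{\mathbf A(x)}_{F_r}[\zeta;X]\ge r\,\mu_r(\mathbf A)\,|\zeta|^{r-2}\big(|X|^2+V(x)|\zeta|^2\big).$$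
   Context: $\langle \xi,\sigma\rangle=\sum_j\xi_j\overline{\sigma_j}$. $\mathcal{A}(\Omega)$: measurable $A:\Omega\to\mathbb{C}^{d\times d}$ with $\lambda,\Lambda>0$ such that $\Re\langle A(x)\xi,\xi\rangle\ge\lambda|\xi|^2$, $|\langle A(x)\xi,\sigma\rangle|\le\Lambda|\xi||\sigma|$ a.e. For $r>0$: $\mathcal{J}_r\xi=\frac r2(\xi+(1-\frac2r)\overline\xi)$, $\Delta_r(A)=\operatorname{ess\,inf}_{x}\min_{|\xi|=1}\Re\langle A(x)\xi,\xi+|1-2/r|\overline\xi\rangle$, $\mathcal A_r(\Omega)=\{A:\Delta_r(A)>0\}$, $\Gamma_r^{\mathbf A}(x,\xi)=\Re\langle A(x)\xi,\mathcal J_r\xi\rangle+\Re\langle b(x)+\mathcal J_rc(x),\xi\rangle+V(x)$, and $\mathcal S_r(\Omega)$ is the set of such quadruples with $A\in\mathcal A_r(\Omega)$, $|b-c|\le M\sqrt V$ a.e. for some $M$, and $\Gamma_r^{\mathbf A}(x,\xi)\ge\mu(|\xi|^2+V(x))$ a.e., all $\xi$, for some $\mu>0$; $\mu_r(\mathbf A)$ is the largest such $\mu$. Real forms: $\mathcal V_d:\mathbb C^d\to\mathbb R^{2d}$, $\mathcal V_d(\xi_1+i\xi_2)=(\xi_1,\xi_2)$; for $A\in\mathbb C^{d\times d}$, $\mathcal M(A)=\begin{bmatrix}\Re A&-\Im A\\ \Im A&\Re A\end{bmatrix}$. For $\phi:\mathbb C\to\mathbb R$ of class $C^2$ near $\zeta$,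 let $D^2\phi(\zeta)$ and $\nabla\phi(\zeta)$ be the Hessian and gradient of $\phi\circ\mathcal V_1^{-1}$ at $\mathcal V_1(\zeta)$. For $A\in\mathbb C^{d\times d}$, $b,c\in\mathbb C^d$, $V\in\mathbb R$, $\mathbf A=(A,b,c,V)$, define $\mathbf H^{\mathbf A}_\phi[\zeta;X]=\langle (D^2\phi(\zeta)\otimes I_{\mathbb R^d})\mathcal V_d(X),\mathcal M(A)\mathcal V_d(X)\rangle_{\mathbb R^{2d}}+\langle (D^2\phi(\zeta)\otimes I_{\mathbb R^d})\mathcal V_d(X),\mathcal V_d(\zeta c)\rangle_{\mathbb R^{2d}}+\langle\nabla\phi(\zeta),\mathcal V_1(\langle X,b\rangle)\rangle_{\mathbb R^2}+\langle\nabla\phi(\zeta),\mathcal V_1(V\zeta)\rangle_{\mathbb R^2}$, where $\otimes$ is the Kronecker product. $F_r(\zeta)=|\zeta|^r$. $\mathbf A(x)=(A(x),b(x),c(x),V(x))$. *)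

theory Defs
  imports "HOL-Analysis.Analysis"
begin

definition cinner :: "complex^'n \<Rightarrow> complex^'n \<Rightarrow> complex" where
  "cinner \<xi> \<sigma> = (\<Sum>j\<in>UNIV. \<xi>$j * cnj (\<sigma>$j))"

definition cnjv :: "complex^'n \<Rightarrow> complex^'n" where
  "cnjv \<xi> = (\<chi> j. cnj (\<xi>$j))"

definition Jr :: "real \<Rightarrow> complex^'n \<Rightarrow> complex^'n" where
  "Jr r \<xi> = (\<chi> j. complex_of_real (r/2) * (\<xi>$j + complex_of_real (1 - 2/r) * cnj (\<xi>$j)))"

definition ellipticA :: "(real^'n) set \<Rightarrow> (real^'n \<Rightarrow> complex^'n^'n) \<Rightarrow> bool" where
  "ellipticA \<Omega> A \<longleftrightarrow> A \<in> borel_measurable (lebesgue_on \<Omega>) \<and>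
     (\<exists>lam>0. \<exists>Lam>0. AE x in lebesgue_on \<Omega>.
        (\<forall>\<xi>. Re (cinner (A x *v \<xi>) \<xi>) \<ge> lam * (norm \<xi>)\<^sup>2) \<and>
        (\<forall>\<xi> \<sigma>. cmod (cinner (A x *v \<xi>) \<sigma>) \<le> Lam * norm \<xi> * norm \<sigma>))"

definition Delta_r :: "(real^'n) set \<Rightarrow> real \<Rightarrow> (real^'n \<Rightarrow> complex^'n^'n) \<Rightarrow> real" where
  "Delta_r \<Omega> r A = Sup {\<delta>. AE x in lebesgue_on \<Omega>. \<forall>\<xi>. norm \<xi> = 1 \<longrightarrow>
       \<delta> \<le> Re (cinner (A x *v \<xi>) (\<xi> + complex_of_real \<bar>1 - 2/r\<bar> *s cnjv \<xi>))}"

definition Gamma_r :: "real \<Rightarrow> complex^'n^'n \<Rightarrow> complex^'n \<Rightarrow> complex^'n \<Rightarrow> real \<Rightarrow> complex^'n \<Rightarrow> real" where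
  "Gamma_r r A b c V \<xi> = Re (cinner (A *v \<xi>) (Jr r \<xi>)) + Re (cinner (b + Jr r c) \<xi>) + V"

definition Sr :: "(real^'n) set \<Rightarrow> real \<Rightarrow> (real^'n \<Rightarrow> complex^'n^'n) \<Rightarrow> (real^'n \<Rightarrow> complex^'n)
      \<Rightarrow> (real^'n \<Rightarrow> complex^'n) \<Rightarrow> (real^'n \<Rightarrow> real) \<Rightarrow> bool" where
  "Sr \<Omega> r A b c V \<longleftrightarrow> ellipticA \<Omega> A \<and> Delta_r \<Omega> r A > 0 \<and>
     (\<exists>M. AE x in lebesgue_on \<Omega>. norm (b x - c x) \<le> M * sqrt (V x)) \<and>
     (\<exists>\<mu>>0. AE x in lebesgue_on \<Omega>. \<forall>\<xi>.
        Gamma_r r (A x) (b x) (c x) (V x) \<xi> \<ge> \<mu> * ((norm \<xi>)\<^sup>2 + V x))"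

definition mu_r :: "(real^'n) set \<Rightarrow> real \<Rightarrow> (real^'n \<Rightarrow> complex^'n^'n) \<Rightarrow> (real^'n \<Rightarrow> complex^'n)
      \<Rightarrow> (real^'n \<Rightarrow> complex^'n) \<Rightarrow> (real^'n \<Rightarrow> real) \<Rightarrow> real" where
  "mu_r \<Omega> r A b c V = Sup {\<mu>. \<mu> > 0 \<and> (AE x in lebesgue_on \<Omega>. \<forall>\<xi>.
        Gamma_r r (A x) (b x) (c x) (V x) \<xi> \<ge> \<mu> * ((norm \<xi>)\<^sup>2 + V x))}"

text \<open>Real forms. R^{2d} is indexed by 2 \<times> 'n, (1,k) real parts, (2,k) imaginary parts.\<close>
definition Vd :: "complex^'n \<Rightarrow> real^(2 \<times> 'n)" where
  "Vd X = (\<chi> p. if fst p = 1 then Re (X $ snd p) else Im (X $ snd p))"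

definition V1 :: "complex \<Rightarrow> real^2" where
  "V1 z = vector [Re z, Im z]"

definition V1inv :: "real^2 \<Rightarrow> complex" where
  "V1inv p = Complex (p$1) (p$2)"

definition MA :: "complex^'n^'n \<Rightarrow> real^(2 \<times> 'n)^(2 \<times> 'n)" where
  "MA A = (\<chi> p q. if fst p = fst q then Re (A $ snd p $ snd q)
                   else if fst p = 1 then - Im (A $ snd p $ snd q)
                   else Im (A $ snd p $ snd q))"

definition kron :: "real^'a^'a \<Rightarrow> real^'b^'b \<Rightarrow> real^('a \<times> 'b)^('a \<times> 'b)" where
  "kron P Q = (\<chi> p q. P $ fst p $ fst q * Q $ snd p $ snd q)"

definition partial :: "(real^2 \<Rightarrow> real) \<Rightarrow> 2 \<Rightarrow> real^2 \<Rightarrow> real" where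
  "partial f i p = deriv (\<lambda>t. f (p + t *\<^sub>R axis i 1)) 0"

definition D2 :: "(complex \<Rightarrow> real) \<Rightarrow> complex \<Rightarrow> real^2^2" where
  "D2 \<phi> \<zeta> = (\<chi> i j. partial (\<lambda>q. partial (\<phi> \<circ> V1inv) j q) i (V1 \<zeta>))"

definition grad :: "(complex \<Rightarrow> real) \<Rightarrow> complex \<Rightarrow> real^2" where
  "grad \<phi> \<zeta> = (\<chi> i. partial (\<phi> \<circ> V1inv) i (V1 \<zeta>))"

definition Hphi :: "(complex \<Rightarrow> real) \<Rightarrow> complex^'n^'n \<Rightarrow> complex^'n \<Rightarrow> complex^'n \<Rightarrow> real
      \<Rightarrow> complex \<Rightarrow> complex^'n \<Rightarrow> real" where
  "Hphi \<phi> A b c V \<zeta> X =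
     (kron (D2 \<phi> \<zeta>) (mat 1) *v Vd X) \<bullet> (MA A *v Vd X)
   + (kron (D2 \<phi> \<zeta>) (mat 1) *v Vd X) \<bullet> Vd (\<zeta> *s c)
   + grad \<phi> \<zeta> \<bullet> V1 (cinner X b)
   + grad \<phi> \<zeta> \<bullet> V1 (complex_of_real V * \<zeta>)"

definition F_r :: "real \<Rightarrow> complex \<Rightarrow> real" where
  "F_r r \<zeta> = cmod \<zeta> powr r"

definition Linf_on :: "(real^'n) set \<Rightarrow> (real^'n \<Rightarrow> 'b::euclidean_space) \<Rightarrow> bool" where
  "Linf_on \<Omega> f \<longleftrightarrow> f \<in> borel_measurable (lebesgue_on \<Omega>) \<and>
     (\<exists>C. AE x in lebesgue_on \<Omega>. norm (f x) \<le> C)"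

definition L1loc_on :: "(real^'n) set \<Rightarrow> (real^'n \<Rightarrow> real) \<Rightarrow> bool" where
  "L1loc_on \<Omega> f \<longleftrightarrow> f \<in> borel_measurable (lebesgue_on \<Omega>) \<and>
     (\<forall>K. compact K \<and> K \<subseteq> \<Omega> \<longrightarrow> integrable (lebesgue_on K) f)"

end

(*
  For zeta ~= 0 write X = zeta xi. The gradient of F_r(zeta) = |zeta|^r is r |zeta|^(r-2) zeta,
  and its Hessian, read in complex notation, is
    w |-> r |zeta|^(r-2) (w + (r - 2) Re (w conj zeta) zeta / |zeta|^2),
  which maps zeta u to r |zeta|^(r-2) zeta J_r u. Consequently every term of H picks up the same
  factor and H^A_{F_r}[zeta; zeta xi] = r |zeta|^r Gamma_r^A(xi), so both claims are pointwise
  consequences of the lower bounds on Gamma_r. For the second one, mu_r(A) is itself an admissible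
  constant: it is the limit of a sequence of admissible constants, and countably many a.e.
  inequalities hold simultaneously. The admissible constants are bounded above because the open
  set Omega has positive measure.
*)

theory Submission
  imports Defs
begin

lemma cinner_scalar_mult_left: "cinner (a *s u) w = a * cinner u w"
  by (simp add: cinner_def sum_distrib_left mult.assoc)

lemma cinner_scalar_mult_right: "cinner u (a *s w) = cnj a * cinner u w"
  by (simp add: cinner_def sum_distrib_left algebra_simps)

lemma cinner_add_left: "cinner (u + v) w = cinner u w + cinner v w"
  by (simp add: cinner_def sum.distrib algebra_simps)

lemma Re_cinner_commute: "Re (cinner u w) = Re (cinner w u)"
  by (simp add: cinner_def Re_sum mult.commute)

lemma Re_cinner_Jr_commute: "Re (cinner (Jr r u) w) = Re (cinner (Jr r w) u)"
  by (cases "r = 0") (simp_all add: cinner_def Jr_def Re_sum algebra_simps)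

lemma Re_mult_cnj_self: "Re (z * w * cnj z) = (cmod z)\<^sup>2 * Re w"
  by (simp add: cmod_power2 algebra_simps) (simp add: power2_eq_square algebra_simps)

lemma Re_cinner_scalar_mult_both:
  "Re (cinner ((of_real a * z) *s u) (z *s w)) = a * (cmod z)\<^sup>2 * Re (cinner u w)"
  using Re_mult_cnj_self[of z "of_real a * cinner u w"]
  by (simp add: cinner_scalar_mult_left cinner_scalar_mult_right mult_ac)

lemma norm_scalar_mult_vec: "norm (z *s (u :: complex^'n)) = cmod z * norm u"
  by (simp add: norm_vec_def L2_set_right_distrib norm_mult)

lemma V1_nth [simp]: "V1 z $ 1 = Re z" "V1 z $ 2 = Im z"
  by (simp_all add: V1_def)

lemma norm_V1 [simp]: "norm (V1 z) = cmod z"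
  by (simp add: norm_vec_def L2_set_def sum_2 cmod_def)

lemma V1_eq_0_iff [simp]: "V1 z = 0 \<longleftrightarrow> z = 0"
  by (metis norm_V1 norm_eq_zero)

lemma inner_V1: "V1 z \<bullet> V1 w = Re (w * cnj z)"
  by (simp add: inner_vec_def sum_2)

lemma sum_UNIV_2_times:
  "(\<Sum>p\<in>(UNIV :: (2 \<times> 'n::finite) set). f p) = (\<Sum>k\<in>UNIV. f (1, k) + f (2, k))"
proof -
  have "(\<Sum>p\<in>(UNIV :: (2 \<times> 'n) set). f p) = (\<Sum>a\<in>UNIV. \<Sum>k\<in>UNIV. f (a, k))"
    unfolding UNIV_Times_UNIV[symmetric] sum.cartesian_product by (simp add: case_prod_beta)
  then show ?thesis by (simp add: sum_2 sum.distrib)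
qed

lemma matrix_vector_mult_V1_nth: "(P *v V1 w) $ a = P $ a $ 1 * Re w + P $ a $ 2 * Im w"
  by (simp add: matrix_vector_mult_def sum_2)

lemma Vd_nth: "Vd X $ (a, k) = V1 (X $ k) $ a"
  using exhaust_2[of a] by (auto simp: Vd_def)

lemma kron_mat1_nth: "kron P (mat 1) $ (a, k) $ (b, l) = (if k = l then P $ a $ b else 0)"
  by (simp add: kron_def mat_def)

lemma inner_Vd: "Vd u \<bullet> Vd w = Re (cinner u w)"
  by (simp add: inner_vec_def sum_UNIV_2_times Vd_def cinner_def Re_sum)

lemma MA_mult_Vd: "MA A *v Vd X = Vd (A *v X)"
proof -
  have "(MA A *v Vd X) $ (a, k) = Vd (A *v X) $ (a, k)" for a k
  proof (cases "a = 1")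
    case True
    then show ?thesis
      by (simp add: matrix_vector_mult_def MA_def Vd_def sum_UNIV_2_times Re_sum sum_subtractf)
  next
    case False
    then have "a = 2" using exhaust_2[of a] by blast
    then show ?thesis
      by (simp add: matrix_vector_mult_def MA_def Vd_def sum_UNIV_2_times Im_sum sum.distrib
          algebra_simps)
  qed
  then show ?thesis by (simp add: vec_eq_iff)
qed

lemma kron_mat1_mult_Vd_nth: "(kron P (mat 1) *v Vd X) $ (a, k) = (P *v V1 (X $ k)) $ a"
proof -
  have "(kron P (mat 1) *v Vd X) $ (a, k) =
      (\<Sum>l\<in>UNIV. if k = l then P $ a $ 1 * Re (X $ l) + P $ a $ 2 * Im (X $ l) else 0)"
    unfolding matrix_vector_mult_def vec_lambda_beta sum_UNIV_2_times kron_mat1_nth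
    by (intro sum.cong) (simp_all add: Vd_nth)
  then show ?thesis
    unfolding matrix_vector_mult_V1_nth by (subst (asm) sum.delta') simp_all
qed

lemma kron_mat1_mult_Vd:
  assumes "\<And>k. P *v V1 (X $ k) = V1 (Y $ k)"
  shows "kron P (mat 1) *v Vd X = Vd Y"
  using assms by (simp add: vec_eq_iff split_paired_All kron_mat1_mult_Vd_nth Vd_nth)

lemma has_real_derivative_norm_powr_line:
  fixes p e :: "'a::real_inner"
  assumes "p \<noteq> 0"
  shows "((\<lambda>t. norm (p + t *\<^sub>R e) powr a) has_real_derivative
           a * norm p powr (a - 2) * (p \<bullet> e)) (at 0)"
proof -
  have norm_powr: "norm q powr a = (q \<bullet> q) powr (a/2)" for q :: 'a
    by (simp add: norm_eq_sqrt_inner powr_half_sqrt[symmetric] powr_powr)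
  have "((\<lambda>t. (p + t *\<^sub>R e) \<bullet> (p + t *\<^sub>R e)) has_real_derivative 2 * (p \<bullet> e)) (at 0)"
    by (auto simp: inner_add inner_commute intro!: derivative_eq_intros)
  from DERIV_fun_powr[OF this, of "a/2"]
  have "((\<lambda>t. norm (p + t *\<^sub>R e) powr a) has_real_derivative
           a/2 * (p \<bullet> p) powr (a/2 - 1) * (2 * (p \<bullet> e))) (at 0)"
    using assms by (simp add: norm_powr)
  moreover have "(p \<bullet> p) powr (a/2 - 1) = norm p powr (a - 2)"
    by (simp add: norm_eq_sqrt_inner powr_half_sqrt[symmetric] powr_powr diff_divide_distrib)
  ultimately show ?thesis by (simp add: mult.assoc)
qed

lemma partial_eqI:
  "((\<lambda>t. f (p + t *\<^sub>R axis i 1)) has_real_derivative D) (at 0) \<Longrightarrow> partial f i p = D"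
  unfolding partial_def by (rule DERIV_imp_deriv)

lemma partial_norm_powr:
  assumes "p \<noteq> 0"
  shows "partial (\<lambda>q. norm q powr r) j p = r * norm p powr (r - 2) * p $ j"
  using has_real_derivative_norm_powr_line[OF assms, of "axis j 1" r]
  by (intro partial_eqI) (simp add: inner_axis)

lemma partial2_norm_powr:
  assumes "p \<noteq> 0"
  shows "partial (partial (\<lambda>q. norm q powr r) j) i p =
     r * ((r - 2) * norm p powr (r - 4) * p $ i * p $ j
          + norm p powr (r - 2) * (if i = j then 1 else 0))"
    (is "_ = ?D")
proof (rule partial_eqI)
  let ?e = "axis i 1 :: real^2"
  have "\<forall>\<^sub>F t in nhds 0. p + t *\<^sub>R ?e \<noteq> 0"
    using assms by (intro tendsto_imp_eventually_ne[where c = "p + 0 *\<^sub>R ?e"])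
      (auto intro!: tendsto_eq_intros filterlim_ident)
  then have "\<forall>\<^sub>F t in nhds 0. partial (\<lambda>q. norm q powr r) j (p + t *\<^sub>R ?e)
      = r * (norm (p + t *\<^sub>R ?e) powr (r - 2) * (p + t *\<^sub>R ?e) $ j)"
    by eventually_elim (simp add: partial_norm_powr mult.assoc)
  moreover have "((\<lambda>t. r * (norm (p + t *\<^sub>R ?e) powr (r - 2) * (p + t *\<^sub>R ?e) $ j))
      has_real_derivative ?D) (at 0)"
  proof -
    have d1: "((\<lambda>t. norm (p + t *\<^sub>R ?e) powr (r - 2))
        has_real_derivative (r - 2) * norm p powr (r - 4) * p $ i) (at 0)"
      using has_real_derivative_norm_powr_line[OF assms, of ?e "r - 2"] by (simp add: inner_axis)
    have d2: "((\<lambda>t. (p + t *\<^sub>R ?e) $ j) has_real_derivative (if i = j then 1 else 0)) (at 0)"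
      by (auto simp: axis_def intro!: derivative_eq_intros)
    show ?thesis
      by (rule DERIV_cong[OF DERIV_cmult[OF DERIV_mult[OF d1 d2]]]) (simp add: algebra_simps)
  qed
  ultimately show "((\<lambda>t. partial (\<lambda>q. norm q powr r) j (p + t *\<^sub>R ?e))
      has_real_derivative ?D) (at 0)"
    by (rule DERIV_cong_ev[OF refl _ refl, THEN iffD2])
qed

lemma F_r_comp_V1inv: "F_r r \<circ> V1inv = (\<lambda>q. norm q powr r)"
  by (auto simp: F_r_def V1inv_def cmod_def norm_vec_def L2_set_def sum_2)

lemma grad_F_r:
  assumes "z \<noteq> 0"
  shows "grad (F_r r) z = (r * cmod z powr (r - 2)) *\<^sub>R V1 z"
proof -
  have "grad (F_r r) z $ i = r * cmod z powr (r - 2) * V1 z $ i" for i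
    using partial_norm_powr[of "V1 z" r i] assms by (simp add: grad_def F_r_comp_V1inv)
  then show ?thesis by (simp add: vec_eq_iff)
qed

lemma D2_F_r:
  assumes "z \<noteq> 0"
  shows "D2 (F_r r) z $ i $ j =
    r * cmod z powr (r - 2) * ((if i = j then 1 else 0) + (r - 2) * V1 z $ i * V1 z $ j / (cmod z)\<^sup>2)"
proof -
  have "cmod z powr (r - 4) = cmod z powr ((r - 2) - 2)"
    by simp
  also have "\<dots> = cmod z powr (r - 2) / (cmod z)\<^sup>2"
    unfolding powr_diff[of _ "r - 2" 2] by (simp add: powr_numeral)
  finally have "cmod z powr (r - 4) = cmod z powr (r - 2) / (cmod z)\<^sup>2" .
  then show ?thesis
    using assms by (simp add: D2_def F_r_comp_V1inv partial2_norm_powr field_simps)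
qed

lemma inner_grad_F_r_V1:
  assumes "z \<noteq> 0"
  shows "grad (F_r r) z \<bullet> V1 w = r * cmod z powr (r - 2) * Re (w * cnj z)"
  using assms by (simp add: grad_F_r inner_V1)

lemma D2_F_r_mult_V1:
  assumes "z \<noteq> 0"
  shows "D2 (F_r r) z *v V1 w =
    V1 (of_real (r * cmod z powr (r - 2))
        * (w + of_real ((r - 2) * Re (w * cnj z) / (cmod z)\<^sup>2) * z))"
  using assms by (simp add: vec_eq_iff forall_2 matrix_vector_mult_def sum_2 D2_F_r field_simps)

lemma D2_F_r_mult_V1_mult:
  assumes "z \<noteq> 0" "r \<noteq> 0"
  shows "D2 (F_r r) z *v V1 (z * u) =
    V1 (of_real (r * cmod z powr (r - 2)) * z
        * (of_real (r/2) * (u + of_real (1 - 2/r) * cnj u)))"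
proof -
  have "(r - 2) * Re (z * u * cnj z) / (cmod z)\<^sup>2 = (r - 2) * Re u"
    unfolding Re_mult_cnj_self using assms(1) by simp
  moreover have "u + of_real ((r - 2) * Re u) = of_real (r/2) * (u + of_real (1 - 2/r) * cnj u)"
    using assms(2) by (simp add: complex_eq_iff field_simps)
  ultimately have "z * u + of_real ((r - 2) * Re (z * u * cnj z) / (cmod z)\<^sup>2) * z
      = z * (of_real (r/2) * (u + of_real (1 - 2/r) * cnj u))"
    by (metis distrib_left mult.commute)
  then show ?thesis
    unfolding D2_F_r_mult_V1[OF assms(1)] by (simp only: mult.assoc)
qed

lemma kron_D2_F_r_mult_Vd:
  assumes "z \<noteq> 0" "r \<noteq> 0"
  shows "kron (D2 (F_r r) z) (mat 1) *v Vd (z *s \<xi>) =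
    Vd ((of_real (r * cmod z powr (r - 2)) * z) *s Jr r \<xi>)"
  by (rule kron_mat1_mult_Vd) (simp add: D2_F_r_mult_V1_mult[OF assms] Jr_def)

lemma Hphi_F_r_eq_Gamma_r:
  assumes "z \<noteq> 0" "r \<noteq> 0"
  shows "Hphi (F_r r) A b c V z (z *s \<xi>) = r * cmod z powr r * Gamma_r r A b c V \<xi>"
proof -
  define \<alpha> where "\<alpha> = r * cmod z powr (r - 2)"
  have \<alpha>: "\<alpha> * (cmod z)\<^sup>2 = r * cmod z powr r"
    using assms(1) by (simp add: \<alpha>_def powr_diff powr_numeral)
  have Y: "kron (D2 (F_r r) z) (mat 1) *v Vd (z *s \<xi>) = Vd ((of_real \<alpha> * z) *s Jr r \<xi>)"
    unfolding \<alpha>_def by (rule kron_D2_F_r_mult_Vd[OF assms])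
  have grad: "grad (F_r r) z \<bullet> V1 w = \<alpha> * Re (w * cnj z)" for w
    unfolding \<alpha>_def by (rule inner_grad_F_r_V1[OF assms(1)])
  have "(kron (D2 (F_r r) z) (mat 1) *v Vd (z *s \<xi>)) \<bullet> (MA A *v Vd (z *s \<xi>))
      = \<alpha> * (cmod z)\<^sup>2 * Re (cinner (A *v \<xi>) (Jr r \<xi>))"
    unfolding Y MA_mult_Vd inner_Vd vector_scalar_commute Re_cinner_scalar_mult_both
    by (simp only: Re_cinner_commute[of "Jr r \<xi>"])
  moreover have "(kron (D2 (F_r r) z) (mat 1) *v Vd (z *s \<xi>)) \<bullet> Vd (z *s c)
      = \<alpha> * (cmod z)\<^sup>2 * Re (cinner (Jr r c) \<xi>)"
    unfolding Y inner_Vd Re_cinner_scalar_mult_both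
    by (simp only: Re_cinner_Jr_commute[of r \<xi> c])
  moreover have "grad (F_r r) z \<bullet> V1 (cinner (z *s \<xi>) b)
      = \<alpha> * (cmod z)\<^sup>2 * Re (cinner b \<xi>)"
    unfolding grad cinner_scalar_mult_left Re_mult_cnj_self by (simp add: Re_cinner_commute[of \<xi>])
  moreover have "grad (F_r r) z \<bullet> V1 (of_real V * z) = \<alpha> * (cmod z)\<^sup>2 * V"
    unfolding grad using Re_mult_cnj_self[of z "of_real V"] by (simp add: mult.commute)
  ultimately have "Hphi (F_r r) A b c V z (z *s \<xi>) = \<alpha> * (cmod z)\<^sup>2 * Gamma_r r A b c V \<xi>"
    by (simp add: Hphi_def Gamma_r_def cinner_add_left distrib_left)
  then show ?thesis
    unfolding \<alpha> .
qed

lemma ae_filter_lebesgue_on_open_neq_bot: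
  fixes \<Omega> :: "'a::euclidean_space set"
  assumes "open \<Omega>" "\<Omega> \<noteq> {}"
  shows "ae_filter (lebesgue_on \<Omega>) \<noteq> bot"
proof
  assume "ae_filter (lebesgue_on \<Omega>) = bot"
  then have "emeasure lebesgue \<Omega> = 0"
    using assms(1)
    by (simp add: ae_filter_eq_bot_iff emeasure_restrict_space space_restrict_space)
  then have "negligible \<Omega>"
    using assms(1) by (simp add: negligible_iff_null_sets null_sets_def borel_open)
  then show False
    using open_not_negligible assms by blast
qed

lemma bdd_above_AE_lower_constants:
  fixes g w :: "'a \<Rightarrow> real"
  assumes "ae_filter M \<noteq> bot"
    and "AE x in M. 0 < w x"
    and "\<forall>\<mu>\<in>S. AE x in M. \<mu> * w x \<le> g x"
  shows "bdd_above S"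
proof (rule ccontr)
  assume "\<not> bdd_above S"
  then have "\<forall>n::nat. \<exists>\<mu>\<in>S. real n < \<mu>"
    by (meson bdd_above.I not_le)
  then obtain f where f: "\<And>n. f n \<in> S" "\<And>n. real n < f n" by metis
  have "AE x in M. \<forall>n. f n * w x \<le> g x"
    using assms(3) f(1) by (simp add: AE_all_countable)
  with assms(2) have "AE x in M. 0 < w x \<and> (\<forall>n. f n * w x \<le> g x)"
    by eventually_elim blast
  then obtain x where x: "0 < w x" "\<And>n. f n * w x \<le> g x"
    using eventually_happens'[OF assms(1)] by blast
  obtain n :: nat where "g x / w x < real n"
    using reals_Archimedean2 by blast
  then have "g x < real n * w x"
    using x(1) by (simp add: divide_less_eq)
  also have "\<dots> < f n * w x"
    using f(2) x(1) by (rule mult_strict_right_mono)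
  finally show False using x(2)[of n] by simp
qed

lemma AE_Sup_lower_constant:
  fixes G w :: "'a \<Rightarrow> 'b \<Rightarrow> real"
  assumes "S \<noteq> {}" "bdd_above S"
    and "\<forall>\<mu>\<in>S. AE x in M. \<forall>\<eta>. \<mu> * w x \<eta> \<le> G x \<eta>"
  shows "AE x in M. \<forall>\<eta>. Sup S * w x \<eta> \<le> G x \<eta>"
proof -
  obtain f where f: "\<And>n. f n \<in> S" "f \<longlonglongrightarrow> Sup S"
    using closure_contains_Sup[OF assms(1,2)] unfolding closure_sequential by blast
  have "AE x in M. \<forall>n \<eta>. f n * w x \<eta> \<le> G x \<eta>"
    using assms(3) f(1) by (simp add: AE_all_countable)
  then show ?thesis
  proof eventually_elim
    case (elim x)
    show ?case
    proof
      fix \<eta>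
      have "(\<lambda>n. f n * w x \<eta>) \<longlonglongrightarrow> Sup S * w x \<eta>"
        using f(2) by (rule tendsto_mult_right)
      then show "Sup S * w x \<eta> \<le> G x \<eta>"
        using elim by (intro LIMSEQ_le_const2) auto
    qed
  qed
qed

lemma AE_Gamma_r_ge_mu_r:
  fixes \<Omega> :: "(real^'n) set"
  assumes "open \<Omega>" "\<Omega> \<noteq> {}" "AE x in lebesgue_on \<Omega>. V x \<ge> 0" "Sr \<Omega> r A b c V"
  shows "AE x in lebesgue_on \<Omega>. \<forall>\<xi>.
    mu_r \<Omega> r A b c V * ((norm \<xi>)\<^sup>2 + V x) \<le> Gamma_r r (A x) (b x) (c x) (V x) \<xi>"
proof -
  define S where "S = {\<mu>. \<mu> > 0 \<and> (AE x in lebesgue_on \<Omega>. \<forall>\<xi>.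
      Gamma_r r (A x) (b x) (c x) (V x) \<xi> \<ge> \<mu> * ((norm \<xi>)\<^sup>2 + V x))}"
  have lower: "\<forall>\<mu>\<in>S. AE x in lebesgue_on \<Omega>. \<forall>\<xi>.
      \<mu> * ((norm \<xi>)\<^sup>2 + V x) \<le> Gamma_r r (A x) (b x) (c x) (V x) \<xi>"
    by (simp add: S_def)
  have "S \<noteq> {}"
    using assms(4) by (auto simp: Sr_def S_def)
  moreover have "bdd_above S"
  proof (rule bdd_above_AE_lower_constants)
    show "ae_filter (lebesgue_on \<Omega>) \<noteq> bot"
      using assms(1,2) by (rule ae_filter_lebesgue_on_open_neq_bot)
    show "AE x in lebesgue_on \<Omega>. 0 < (norm (1 :: complex^'n))\<^sup>2 + V x"
      using assms(3) by eventually_elim (simp add: add_pos_nonneg)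
    show "\<forall>\<mu>\<in>S. AE x in lebesgue_on \<Omega>.
        \<mu> * ((norm (1 :: complex^'n))\<^sup>2 + V x) \<le> Gamma_r r (A x) (b x) (c x) (V x) 1"
    proof
      fix \<mu> assume "\<mu> \<in> S"
      with lower show "AE x in lebesgue_on \<Omega>.
          \<mu> * ((norm (1 :: complex^'n))\<^sup>2 + V x) \<le> Gamma_r r (A x) (b x) (c x) (V x) 1"
        by (auto elim: eventually_mono)
    qed
  qed
  ultimately show ?thesis
    using AE_Sup_lower_constant[OF _ _ lower] by (simp add: mu_r_def S_def)
qed

theorem proposition4p2:
  fixes \<Omega> :: "(real^'n) set"
    and A :: "real^'n \<Rightarrow> complex^'n^'n"
    and b c :: "real^'n \<Rightarrow> complex^'n"
    and V :: "real^'n \<Rightarrow> real"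
    and r :: real and \<zeta> :: complex and X :: "complex^'n"
  assumes "open \<Omega>" and "\<Omega> \<noteq> {}"
    and "ellipticA \<Omega> A"
    and "Linf_on \<Omega> b" and "Linf_on \<Omega> c"
    and "L1loc_on \<Omega> V" and "AE x in lebesgue_on \<Omega>. V x \<ge> 0"
    and "r > 0" and "\<zeta> \<noteq> 0"
    and "AE x in lebesgue_on \<Omega>. \<forall>\<xi>. Gamma_r r (A x) (b x) (c x) (V x) \<xi> \<ge> 0"
  shows "(AE x in lebesgue_on \<Omega>. Hphi (F_r r) (A x) (b x) (c x) (V x) \<zeta> X \<ge> 0)
    \<and> (Sr \<Omega> r A b c V \<longrightarrow>
        (AE x in lebesgue_on \<Omega>. Hphi (F_r r) (A x) (b x) (c x) (V x) \<zeta> X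
           \<ge> r * mu_r \<Omega> r A b c V * cmod \<zeta> powr (r - 2) * ((norm X)\<^sup>2 + V x * (cmod \<zeta>)\<^sup>2)))"
proof -
  define \<xi> where "\<xi> = inverse \<zeta> *s X"
  have X: "X = \<zeta> *s \<xi>"
    using assms(9) by (simp add: \<xi>_def vector_smult_assoc)
  have H: "Hphi (F_r r) (A x) (b x) (c x) (V x) \<zeta> X
      = r * cmod \<zeta> powr r * Gamma_r r (A x) (b x) (c x) (V x) \<xi>" for x
    unfolding X using assms(8,9) by (simp add: Hphi_F_r_eq_Gamma_r)
  have scale: "0 < r * cmod \<zeta> powr r"
    using assms(8,9) by simp
  have bound: "r * \<mu> * cmod \<zeta> powr (r - 2) * ((norm X)\<^sup>2 + v * (cmod \<zeta>)\<^sup>2)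
      = r * cmod \<zeta> powr r * (\<mu> * ((norm \<xi>)\<^sup>2 + v))" for \<mu> v
    using assms(9)
    by (simp add: X norm_scalar_mult_vec powr_diff powr_numeral power_mult_distrib field_simps)
  show ?thesis
  proof (intro conjI impI)
    show "AE x in lebesgue_on \<Omega>. Hphi (F_r r) (A x) (b x) (c x) (V x) \<zeta> X \<ge> 0"
      using assms(10) by eventually_elim (simp add: H less_imp_le[OF scale])
  next
    assume "Sr \<Omega> r A b c V"
    with assms(1,2,7) show "AE x in lebesgue_on \<Omega>. Hphi (F_r r) (A x) (b x) (c x) (V x) \<zeta> X
        \<ge> r * mu_r \<Omega> r A b c V * cmod \<zeta> powr (r - 2) * ((norm X)\<^sup>2 + V x * (cmod \<zeta>)\<^sup>2)"
      by (rule AE_Gamma_r_ge_mu_r[THEN eventually_mono])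
        (auto simp: H bound intro!: mult_left_mono less_imp_le[OF scale])
  qed
qed

end
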